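(* Let $P^1,\dots,P^m\in\Delta^n$ ($m\ge 2$) be the rows of a channel matrix $\Phi$ and assume they are in general position. For $k=0,1,\dots,m-2$ let $L_k=L(P^{k+1},\dots,P^m)$. Let $Q^0\in L_0$ be the equidistant point from $P^1,\dots,P^m$, and define recursively $Q^k=\pi(Q^{k-1}\,|\,L_k)$ for $k=1,\dots,m-2$. Let $\boldsymbol\lambda^k=(\lambda^k_1,\dots,\lambda^k_m)$ be the barycentric coordinate of $Q^k$ about $P^1,\dots,P^m$. Let $K\in\{0,1,\dots,m-2\}$ and assume: for every $k=0,1,\dots,K-1$, $\lambda^k_i=0$ for $i=1,\dots,k$, $\lambda^k_{k+1}<0$, and $\lambda^k_i>0$ for $i=k+2,\dots,m$; and $\lambda^K_i=0$ for $i=1,\dots,K$ and $\lambda^K_i>0$ for $i=K+1,\dots,m$ (when $K=0$ the assumption is instead $\lambda^0_i\ge 0$ for all $i=1,\dots,m$). Then the output distribution achieving the channel capacity is $Q^\ast=Q^K$, and the channel capacity is $C=D(P^{K+1}\|Q^K)$.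
   Context: $\Delta^n=\{Q=(Q_1,\dots,Q_n): Q_j>0,\ \sum_j Q_j=1\}$ and $\bar\Delta^m=\{\boldsymbol\lambda\in\mathbb{R}^m:\lambda_i\ge0,\sum_i\lambda_i=1\}$. $D(Q\|Q')=\sum_j Q_j\log(Q_j/Q'_j)$ is the Kullback–Leibler divergence. The channel matrix $\Phi$ is the $m\times n$ matrix with rows $P^i=(P^i_1,\dots,P^i_n)$ (conditional output distributions given input $x_i$). The rows are in general position if $P^2-P^1,\dots,P^m-P^1$ are linearly independent. For points $S^1,\dots,S^r\in\Delta^n$, $L(S^1,\dots,S^r)=\{\sum_i\lambda_iS^i:\sum_i\lambda_i=1\}\cap\Delta^n$ (affine subspace). For $Q'\in\Delta^n$ and such an affine subspace $L$, $\pi(Q'|L)$ denotes the unique $Q\in L$ minimizing $D(Q\|Q')$. The barycentric coordinate of $Q\in L(P^1,\dots,P^m)$ about $P^1,\dots,P^m$ is the unique $\boldsymbol\lambda\in\mathbb{R}^m$ with $\sum_i\lambda_i=1$ and $Q=\sum_i\lambda_iP^i$. The equidistant point from $P^1,\dots,P^m$ is the unique $Q^0\in L(P^1,\dots,P^m)$ with $D(P^1\|Q^0)=\dots=D(P^m\|Q^0)$. The mutual information is $I(\boldsymbol\lambda,\Phi)=\sum_{i,j}\lambda_iP^i_j\log(P^i_j/Q_j)$ with $Q=\boldsymbol\lambda\Phi$; the channel capacity is $C=\max_{\boldsymbol\lambda\in\bar\Delta^m}I(\boldsymbol\lambda,\Phi)$, and the capacity-achieving output distribution $Q^\ast$ is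 $\boldsymbol\lambda^\ast\Phi$ for a maximizing $\boldsymbol\lambda^\ast$ (it is unique, and equals the minimizer of $\max_i D(P^i\|Q)$ over output distributions $Q$). *)

theory Defs
  imports Complex_Main
begin

text \<open>Conventions: output symbols are indexed by j in {1..n}, input symbols by
  i in {1..m}. A distribution on the output alphabet is a function nat => real,
  only its values on {1..n} matter. The channel matrix is P :: nat => nat => real,
  row i being P i (the conditional output distribution given input x_i).\<close>

definition open_simplex :: "nat \<Rightarrow> (nat \<Rightarrow> real) \<Rightarrow> bool" where
  "open_simplex n Q \<longleftrightarrow> (\<forall>j\<in>{1..n}. Q j > 0) \<and> (\<Sum>j=1..n. Q j) = 1"

definition closed_simplex :: "nat \<Rightarrow> (nat \<Rightarrow> real) \<Rightarrow> bool" where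
  "closed_simplex m l \<longleftrightarrow> (\<forall>i\<in>{1..m}. l i \<ge> 0) \<and> (\<Sum>i=1..m. l i) = 1"

definition KL :: "nat \<Rightarrow> (nat \<Rightarrow> real) \<Rightarrow> (nat \<Rightarrow> real) \<Rightarrow> real" where
  "KL n Q Q' = (\<Sum>j=1..n. Q j * ln (Q j / Q' j))"

definition general_position :: "nat \<Rightarrow> nat \<Rightarrow> (nat \<Rightarrow> nat \<Rightarrow> real) \<Rightarrow> bool" where
  "general_position m n P \<longleftrightarrow>
     (\<forall>c::nat \<Rightarrow> real. (\<forall>j\<in>{1..n}. (\<Sum>i=2..m. c i * (P i j - P 1 j)) = 0)
        \<longrightarrow> (\<forall>i\<in>{2..m}. c i = 0))"

definition affL :: "nat \<Rightarrow> (nat \<Rightarrow> nat \<Rightarrow> real) \<Rightarrow> nat set \<Rightarrow> (nat \<Rightarrow> real) set" where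
  "affL n S A = {Q. open_simplex n Q \<and>
     (\<exists>l::nat \<Rightarrow> real. (\<Sum>i\<in>A. l i) = 1 \<and> (\<forall>j\<in>{1..n}. Q j = (\<Sum>i\<in>A. l i * S i j)))}"

definition is_proj :: "nat \<Rightarrow> (nat \<Rightarrow> real) \<Rightarrow> (nat \<Rightarrow> real) set \<Rightarrow> (nat \<Rightarrow> real) \<Rightarrow> bool" where
  "is_proj n Q' L Q \<longleftrightarrow> Q \<in> L \<and> (\<forall>Q''\<in>L. KL n Q Q' \<le> KL n Q'' Q')"

definition is_bary :: "nat \<Rightarrow> nat \<Rightarrow> (nat \<Rightarrow> nat \<Rightarrow> real) \<Rightarrow> (nat \<Rightarrow> real) \<Rightarrow> (nat \<Rightarrow> real) \<Rightarrow> bool" where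
  "is_bary m n P Q l \<longleftrightarrow> (\<Sum>i=1..m. l i) = 1 \<and> (\<forall>j\<in>{1..n}. Q j = (\<Sum>i=1..m. l i * P i j))"

definition out_dist :: "nat \<Rightarrow> (nat \<Rightarrow> nat \<Rightarrow> real) \<Rightarrow> (nat \<Rightarrow> real) \<Rightarrow> nat \<Rightarrow> real" where
  "out_dist m P l j = (\<Sum>i=1..m. l i * P i j)"

definition mutual_info :: "nat \<Rightarrow> nat \<Rightarrow> (nat \<Rightarrow> nat \<Rightarrow> real) \<Rightarrow> (nat \<Rightarrow> real) \<Rightarrow> real" where
  "mutual_info m n P l =
     (\<Sum>i=1..m. \<Sum>j=1..n. l i * P i j * ln (P i j / out_dist m P l j))"

definition capacity :: "nat \<Rightarrow> nat \<Rightarrow> (nat \<Rightarrow> nat \<Rightarrow> real) \<Rightarrow> real" where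
  "capacity m n P = Sup {mutual_info m n P l | l. closed_simplex m l}"

end

theory Submission
  imports Defs
begin

text \<open>
  Each Q^k is the I-projection of Q^(k-1) onto L_k, so the Pythagorean identity
  D(R||Q^(k-1)) = D(R||Q^k) + D(Q^k||Q^(k-1)) holds for R in L_k. Hence P^(k+1), ..., P^m
  remain equidistant from Q^k, and the functional R \<mapsto> \<Sum>_j R_j log(Q^K_j / Q^k_j), which is
  linear in R, is constant on the affine hull of L_K. Writing Q^k in barycentric coordinates,
  the negative weight of P^(k+1) then forces D(P^(k+1)||Q^K) \<le> D(P^m||Q^K); downward induction
  on k gives D(P^i||Q^K) \<le> C := D(P^(K+1)||Q^K) for every i, with equality on the support of
  the input distribution \<lambda>^K. Since I(\<lambda>) = \<Sum>_i \<lambda>_i D(P^i||Q^K) - D(\<lambda>\<Phi>||Q^K) for every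
  input distribution \<lambda>, C is the capacity and Q^K the unique optimal output distribution.
\<close>

definition affine_comb :: "nat \<Rightarrow> (nat \<Rightarrow> nat \<Rightarrow> real) \<Rightarrow> nat set \<Rightarrow> (nat \<Rightarrow> real) \<Rightarrow> bool" where
  "affine_comb n P A R \<longleftrightarrow>
     (\<exists>l. (\<Sum>i\<in>A. l i) = 1 \<and> (\<forall>j\<in>{1..n}. R j = (\<Sum>i\<in>A. l i * P i j)))"

definition expected_llr :: "nat \<Rightarrow> (nat \<Rightarrow> real) \<Rightarrow> (nat \<Rightarrow> real) \<Rightarrow> (nat \<Rightarrow> real) \<Rightarrow> real" where
  "expected_llr n R Q Q' = (\<Sum>j=1..n. R j * ln (Q j / Q' j))"

lemma affL_iff: "Q \<in> affL n P A \<longleftrightarrow> open_simplex n Q \<and> affine_comb n P A Q"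
  by (simp add: affL_def affine_comb_def)

lemma affine_comb_vertex:
  assumes "i \<in> A" "finite A"
  shows "affine_comb n P A (P i)"
  unfolding affine_comb_def
  by (rule exI[of _ "\<lambda>k. if k = i then 1 else 0"])
    (use assms in \<open>simp add: if_distrib[of "\<lambda>c. c * _"] cong: if_cong\<close>)

lemma affine_comb_mono:
  assumes "affine_comb n P B R" "B \<subseteq> A" "finite A"
  shows "affine_comb n P A R"
proof -
  obtain l where l: "(\<Sum>i\<in>B. l i) = 1" "\<forall>j\<in>{1..n}. R j = (\<Sum>i\<in>B. l i * P i j)"
    using assms(1) unfolding affine_comb_def by blast
  have restrict: "(\<Sum>i\<in>A. if i \<in> B then f i else 0) = (\<Sum>i\<in>B. f i)" for f :: "nat \<Rightarrow> real"
    using sum.inter_restrict[OF assms(3), of f B] assms(2) by (simp add: Int_absorb1)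
  show ?thesis
    unfolding affine_comb_def
    by (rule exI[of _ "\<lambda>i. if i \<in> B then l i else 0"])
      (simp add: l if_distrib[of "\<lambda>c. c * _"] restrict cong: if_cong)
qed

lemma affine_comb_sum_eq_1:
  assumes "\<forall>i\<in>A. (\<Sum>j=1..n. P i j) = 1" "affine_comb n P A R"
  shows "(\<Sum>j=1..n. R j) = 1"
proof -
  obtain l where l: "(\<Sum>i\<in>A. l i) = 1" "\<forall>j\<in>{1..n}. R j = (\<Sum>i\<in>A. l i * P i j)"
    using assms(2) unfolding affine_comb_def by blast
  have "(\<Sum>j=1..n. R j) = (\<Sum>i\<in>A. l i * (\<Sum>j=1..n. P i j))"
    unfolding sum_distrib_left using l(2) by (simp add: sum.swap[of _ A])
  also have "\<dots> = 1" using assms(1) l(1) by simp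
  finally show ?thesis .
qed

lemma affine_comb_line:
  assumes "affine_comb n P A Q" "affine_comb n P A R"
  shows "affine_comb n P A (\<lambda>j. Q j + t * (R j - Q j))"
proof -
  obtain lq where lq: "(\<Sum>i\<in>A. lq i) = 1" "\<forall>j\<in>{1..n}. Q j = (\<Sum>i\<in>A. lq i * P i j)"
    using assms(1) unfolding affine_comb_def by blast
  obtain l where l: "(\<Sum>i\<in>A. l i) = 1" "\<forall>j\<in>{1..n}. R j = (\<Sum>i\<in>A. l i * P i j)"
    using assms(2) unfolding affine_comb_def by blast
  show ?thesis
    unfolding affine_comb_def
  proof (intro exI conjI)
    show "(\<Sum>i\<in>A. lq i + t * (l i - lq i)) = 1"
      using lq(1) l(1) by (simp add: sum.distrib sum_subtractf sum_distrib_left[symmetric])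
    show "\<forall>j\<in>{1..n}. Q j + t * (R j - Q j) = (\<Sum>i\<in>A. (lq i + t * (l i - lq i)) * P i j)"
      using lq(2) l(2) by (simp add: algebra_simps sum.distrib sum_subtractf sum_distrib_left)
  qed
qed

lemma expected_llr_affine_comb:
  assumes "\<forall>j\<in>{1..n}. R j = (\<Sum>i\<in>A. l i * P i j)"
  shows "expected_llr n R Q Q' = (\<Sum>i\<in>A. l i * expected_llr n (P i) Q Q')"
  unfolding expected_llr_def
  by (simp add: assms sum_distrib_left sum_distrib_right sum.swap[of _ A] mult.assoc)

lemma KL_eq_expected_llr: "KL n Q Q' = expected_llr n Q Q Q'"
  by (simp add: KL_def expected_llr_def)

lemma KL_self: "KL n Q Q = 0"
  by (auto simp: KL_def intro!: sum.neutral)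

lemma expected_llr_same: "expected_llr n R Q Q = 0"
  by (auto simp: expected_llr_def intro!: sum.neutral)

lemma KL_change_reference:
  assumes "open_simplex n R" "open_simplex n Q" "open_simplex n Q'"
  shows "KL n R Q = KL n R Q' - expected_llr n R Q Q'"
  unfolding KL_def expected_llr_def sum_subtractf[symmetric]
  by (rule sum.cong) (use assms in \<open>auto simp: open_simplex_def ln_divide_pos algebra_simps\<close>)

lemma expected_llr_trans:
  assumes "open_simplex n Q1" "open_simplex n Q2" "open_simplex n Q3"
  shows "expected_llr n R Q1 Q3 = expected_llr n R Q1 Q2 + expected_llr n R Q2 Q3"
  unfolding expected_llr_def sum.distrib[symmetric]
  by (rule sum.cong) (use assms in \<open>auto simp: open_simplex_def ln_divide_pos algebra_simps\<close>)

lemma expected_llr_le_KL: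
  assumes "open_simplex n Q" "open_simplex n Q'"
  shows "expected_llr n Q' Q Q' \<le> KL n Q Q'"
proof -
  have "expected_llr n Q' Q Q' - expected_llr n Q Q Q'
      = (\<Sum>j=1..n. (Q' j - Q j) * (ln (Q j) - ln (Q' j)))"
    unfolding expected_llr_def sum_subtractf[symmetric]
    by (rule sum.cong) (use assms in \<open>auto simp: open_simplex_def ln_divide_pos algebra_simps\<close>)
  also have "\<dots> \<le> 0"
  proof (rule sum_nonpos)
    fix j assume "j \<in> {1..n}"
    then have "Q j > 0" "Q' j > 0" using assms by (auto simp: open_simplex_def)
    then show "(Q' j - Q j) * (ln (Q j) - ln (Q' j)) \<le> 0"
      by (cases "Q j \<le> Q' j") (auto simp: mult_nonpos_nonneg mult_nonneg_nonpos)
  qed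
  finally show ?thesis by (simp add: KL_eq_expected_llr)
qed

lemma mult_ln_ratio_le:
  fixes q q' :: real
  assumes "q > 0" "q' > 0"
  shows "q * ln (q' / q) \<le> q' - q" and "q * ln (q' / q) = q' - q \<Longrightarrow> q' = q"
proof -
  have "q * ln (q' / q) \<le> q * (q' / q - 1)"
    using assms by (intro mult_left_mono ln_le_minus_one) auto
  also have "\<dots> = q' - q" using assms by (simp add: field_simps)
  finally show "q * ln (q' / q) \<le> q' - q" .
  assume "q * ln (q' / q) = q' - q"
  then have "ln (q' / q) = q' / q - 1" using assms by (simp add: field_simps)
  then have "q' / q = 1" using assms by (intro ln_eq_minus_one) auto
  then show "q' = q" using assms by simp
qed

lemma KL_eq_sum_log_gap:
  assumes "open_simplex n Q" "open_simplex n Q'"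
  shows "KL n Q Q' = (\<Sum>j=1..n. Q' j - Q j - Q j * ln (Q' j / Q j))"
proof -
  have "(\<Sum>j=1..n. Q' j - Q j - Q j * ln (Q' j / Q j)) = (\<Sum>j=1..n. Q' j - Q j + Q j * ln (Q j / Q' j))"
    by (rule sum.cong) (use assms in \<open>auto simp: open_simplex_def ln_divide_pos algebra_simps\<close>)
  also have "\<dots> = KL n Q Q'"
    using assms by (simp add: open_simplex_def KL_def sum.distrib sum_subtractf)
  finally show ?thesis by simp
qed

lemma KL_nonneg:
  assumes "open_simplex n Q" "open_simplex n Q'"
  shows "0 \<le> KL n Q Q'"
  unfolding KL_eq_sum_log_gap[OF assms]
  by (rule sum_nonneg) (use assms in \<open>auto simp: open_simplex_def intro!: mult_ln_ratio_le(1)\<close>)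

lemma KL_le_0_imp_eq:
  assumes "open_simplex n Q" "open_simplex n Q'" "KL n Q Q' \<le> 0"
  shows "\<forall>j\<in>{1..n}. Q j = Q' j"
proof
  fix j assume j: "j \<in> {1..n}"
  have pos: "Q i > 0" "Q' i > 0" if "i \<in> {1..n}" for i
    using assms(1,2) that by (auto simp: open_simplex_def)
  have "(\<Sum>i=1..n. Q' i - Q i - Q i * ln (Q' i / Q i)) = 0"
    using assms KL_nonneg[OF assms(1,2)] KL_eq_sum_log_gap[OF assms(1,2)] by simp
  then have "Q' j - Q j - Q j * ln (Q' j / Q j) = 0"
    using j pos by (subst (asm) sum_nonneg_eq_0_iff) (auto dest: mult_ln_ratio_le(1))
  then show "Q j = Q' j" using mult_ln_ratio_le(2)[OF pos[OF j]] by simp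
qed

lemma KL_line_has_derivative:
  assumes "\<forall>j\<in>{1..n}. Q j > 0" "\<forall>j\<in>{1..n}. Q' j > 0"
  shows "((\<lambda>t. KL n (\<lambda>j. Q j + t * D j) Q') has_real_derivative
           (\<Sum>j=1..n. D j * ln (Q j / Q' j) + D j)) (at 0)"
  unfolding KL_def
proof (rule DERIV_sum)
  fix j assume "j \<in> {1..n}"
  then have "Q j > 0" "Q' j > 0" using assms by auto
  then show "((\<lambda>t. (Q j + t * D j) * ln ((Q j + t * D j) / Q' j)) has_real_derivative
               D j * ln (Q j / Q' j) + D j) (at 0)"
    by (auto intro!: derivative_eq_intros simp: field_simps)
qed

lemma eventually_line_pos:
  fixes Q D :: "nat \<Rightarrow> real"
  assumes "\<forall>j\<in>{1..n}. Q j > (0::real)"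
  shows "\<forall>\<^sub>F t in nhds 0. \<forall>j\<in>{1..n}. Q j + t * D j > 0"
proof (intro eventually_ball_finite ballI)
  fix j assume "j \<in> {1..n}"
  moreover have "((\<lambda>t. Q j + t * D j) \<longlongrightarrow> Q j + 0 * D j) (nhds 0)"
    by (intro tendsto_intros) (rule filterlim_ident)
  ultimately show "\<forall>\<^sub>F t in nhds 0. Q j + t * D j > 0"
    using assms by (auto dest: order_tendstoD(1)[where a = 0])
qed simp

text \<open>First-order optimality of the I-projection Q along the line from Q towards R.\<close>

lemma I_projection_expected_llr:
  assumes Q': "open_simplex n Q'" and proj: "is_proj n Q' (affL n P A) Q"
    and rows: "\<forall>i\<in>A. (\<Sum>j=1..n. P i j) = 1" and R: "affine_comb n P A R"
  shows "expected_llr n R Q Q' = KL n Q Q'"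
proof -
  have Q: "open_simplex n Q" "affine_comb n P A Q" and min: "\<forall>Q''\<in>affL n P A. KL n Q Q' \<le> KL n Q'' Q'"
    using proj by (auto simp: is_proj_def affL_iff)
  define D where "D j = R j - Q j" for j
  define F where "F t = KL n (\<lambda>j. Q j + t * D j) Q'" for t
  have sum_D: "(\<Sum>j=1..n. D j) = 0"
    using affine_comb_sum_eq_1[OF rows R] Q(1) by (simp add: D_def sum_subtractf open_simplex_def)
  have line: "(\<lambda>j. Q j + t * D j) \<in> affL n P A" if "\<forall>j\<in>{1..n}. Q j + t * D j > 0" for t
  proof -
    have "open_simplex n (\<lambda>j. Q j + t * D j)"
      using that Q(1) sum_D by (simp add: open_simplex_def sum.distrib sum_distrib_left[symmetric])
    moreover have "affine_comb n P A (\<lambda>j. Q j + t * D j)"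
      unfolding D_def by (rule affine_comb_line[OF Q(2) R])
    ultimately show ?thesis by (simp add: affL_iff)
  qed
  have "\<forall>\<^sub>F t in nhds 0. F 0 \<le> F t"
    using eventually_line_pos[of n Q D] Q(1) line min
    by (auto simp: open_simplex_def F_def elim!: eventually_mono)
  then obtain d where "d > 0" "\<forall>y. \<bar>0 - y\<bar> < d \<longrightarrow> F 0 \<le> F y"
    unfolding eventually_nhds_metric dist_real_def by auto
  moreover have "(F has_real_derivative (\<Sum>j=1..n. D j * ln (Q j / Q' j) + D j)) (at 0)"
    unfolding F_def using Q(1) Q' by (intro KL_line_has_derivative) (auto simp: open_simplex_def)
  ultimately have "(\<Sum>j=1..n. D j * ln (Q j / Q' j) + D j) = 0"
    using DERIV_local_min by blast
  then have "(\<Sum>j=1..n. D j * ln (Q j / Q' j)) = 0"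
    using sum_D by (simp add: sum.distrib)
  then show ?thesis
    by (simp add: expected_llr_def KL_def D_def left_diff_distrib sum_subtractf)
qed

lemma out_dist_open_simplex:
  assumes l: "closed_simplex m l" and rows: "\<forall>i\<in>{1..m}. open_simplex n (P i)"
  shows "open_simplex n (out_dist m P l)"
proof -
  have l0: "\<forall>i\<in>{1..m}. l i \<ge> 0" and l1: "(\<Sum>i=1..m. l i) = 1"
    using l unfolding closed_simplex_def by auto
  obtain i0 where i0: "i0 \<in> {1..m}" "l i0 > 0"
  proof (rule ccontr)
    assume "\<not> thesis"
    then have "(\<Sum>i=1..m. l i) \<le> 0" using that by (intro sum_nonpos) force
    then show False using l1 by simp
  qed
  have "out_dist m P l j > 0" if "j \<in> {1..n}" for j
    unfolding out_dist_def
  proof (rule sum_pos2[OF _ i0(1)])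
    show "0 < l i0 * P i0 j" using rows that i0 by (simp add: open_simplex_def)
    show "0 \<le> l i * P i j" if "i \<in> {1..m}" for i
      using l0 rows that \<open>j \<in> {1..n}\<close> by (simp add: open_simplex_def less_imp_le)
  qed simp
  moreover have "(\<Sum>j=1..n. out_dist m P l j) = 1"
    using affine_comb_sum_eq_1[where A = "{1..m}" and R = "out_dist m P l"] rows l1
    by (auto simp: open_simplex_def affine_comb_def out_dist_def)
  ultimately show ?thesis by (simp add: open_simplex_def)
qed

lemma mutual_info_eq_KL_reference:
  assumes rows: "\<forall>i\<in>{1..m}. open_simplex n (P i)" and "open_simplex n Qs"
    and "open_simplex n (out_dist m P l)"
  shows "mutual_info m n P l = (\<Sum>i=1..m. l i * KL n (P i) Qs) - KL n (out_dist m P l) Qs"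
proof -
  have "mutual_info m n P l = (\<Sum>i=1..m. l i * (KL n (P i) Qs - expected_llr n (P i) (out_dist m P l) Qs))"
    unfolding mutual_info_def
  proof (rule sum.cong[OF refl])
    fix i assume "i \<in> {1..m}"
    then have "open_simplex n (P i)" using rows by blast
    then show "(\<Sum>j=1..n. l i * P i j * ln (P i j / out_dist m P l j))
             = l i * (KL n (P i) Qs - expected_llr n (P i) (out_dist m P l) Qs)"
      using KL_change_reference[of n "P i" "out_dist m P l" Qs] assms(2,3)
      by (simp add: KL_def mult.assoc flip: sum_distrib_left)
  qed
  also have "\<dots> = (\<Sum>i=1..m. l i * KL n (P i) Qs) - expected_llr n (out_dist m P l) (out_dist m P l) Qs"
    using expected_llr_affine_comb[where R = "out_dist m P l" and A = "{1..m}" and l = l and P = P]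
    by (simp add: right_diff_distrib sum_subtractf out_dist_def)
  finally show ?thesis by (simp add: KL_eq_expected_llr)
qed

lemma capacity_eq_max_KL:
  assumes rows: "\<forall>i\<in>{1..m}. open_simplex n (P i)" and Qs: "open_simplex n Qs"
    and ls: "closed_simplex m ls" and out: "\<forall>j\<in>{1..n}. out_dist m P ls j = Qs j"
    and le: "\<forall>i\<in>{1..m}. KL n (P i) Qs \<le> C"
    and support: "\<forall>i\<in>{1..m}. ls i \<noteq> 0 \<longrightarrow> KL n (P i) Qs = C"
  shows "mutual_info m n P ls = C" and "capacity m n P = C"
    and "\<And>l. closed_simplex m l \<Longrightarrow> mutual_info m n P l = C \<Longrightarrow>
           \<forall>j\<in>{1..n}. out_dist m P l j = Qs j"
proof -
  have bound: "mutual_info m n P l \<le> C - KL n (out_dist m P l) Qs" if l: "closed_simplex m l" for l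
  proof -
    have "(\<Sum>i=1..m. l i * KL n (P i) Qs) \<le> (\<Sum>i=1..m. l i * C)"
      using l le by (intro sum_mono mult_left_mono) (auto simp: closed_simplex_def)
    also have "\<dots> = C" using l by (simp add: closed_simplex_def flip: sum_distrib_right)
    finally show ?thesis
      using mutual_info_eq_KL_reference[OF rows Qs out_dist_open_simplex[OF l rows]] by simp
  qed
  have "(\<Sum>i=1..m. ls i * KL n (P i) Qs) = (\<Sum>i=1..m. ls i * C)"
    using support by (intro sum.cong) auto
  also have "\<dots> = C" using ls by (simp add: closed_simplex_def flip: sum_distrib_right)
  finally have "(\<Sum>i=1..m. ls i * KL n (P i) Qs) = C" .
  moreover have "KL n (out_dist m P ls) Qs = 0"
    using out KL_self[of n Qs] by (simp add: KL_def)
  ultimately show max: "mutual_info m n P ls = C"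
    using mutual_info_eq_KL_reference[OF rows Qs out_dist_open_simplex[OF ls rows]] by simp
  have le_C: "mutual_info m n P l \<le> C" if "closed_simplex m l" for l
    using bound[OF that] KL_nonneg[OF out_dist_open_simplex[OF that rows] Qs] by simp
  show cap: "capacity m n P = C"
    unfolding capacity_def using ls max le_C by (intro cSup_eq_maximum) auto
  fix l assume l: "closed_simplex m l" and "mutual_info m n P l = C"
  then have "KL n (out_dist m P l) Qs \<le> 0" using bound[OF l] by simp
  then show "\<forall>j\<in>{1..n}. out_dist m P l j = Qs j"
    using KL_le_0_imp_eq[OF out_dist_open_simplex[OF l rows] Qs] by simp
qed

lemma neg_weight_imp_ge:
  fixes w x :: "nat \<Rightarrow> real"
  assumes "(\<Sum>i=1..m. w i) = 1" "(\<Sum>i=1..m. w i * x i) \<le> s" "k < m"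
    and "\<forall>i\<in>{1..k}. w i = 0" "w (k+1) < 0" "\<forall>i\<in>{k+2..m}. 0 \<le> w i \<and> s \<le> x i"
  shows "s \<le> x (k+1)"
proof -
  have "(\<Sum>i=1..m. w i * (x i - s)) \<le> 0"
    using assms(1,2) by (simp add: right_diff_distrib sum_subtractf flip: sum_distrib_right)
  moreover have "(\<Sum>i=1..m. w i * (x i - s))
      = w (k+1) * (x (k+1) - s) + (\<Sum>i\<in>{1..m} - {k+1}. w i * (x i - s))"
    using assms(3) by (intro sum.remove) auto
  moreover have "(\<Sum>i\<in>{1..m} - {k+1}. w i * (x i - s)) \<ge> 0"
  proof (rule sum_nonneg)
    fix i assume "i \<in> {1..m} - {k+1}"
    then consider "i \<in> {1..k}" | "i \<in> {k+2..m}" by fastforce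
    then show "0 \<le> w i * (x i - s)" using assms(4,6) by cases auto
  qed
  ultimately have "w (k+1) * (x (k+1) - s) \<le> 0" by linarith
  then show ?thesis using assms(5) by (simp add: mult_le_0_iff)
qed

locale I_projection_chain =
  fixes m n :: nat and P Q :: "nat \<Rightarrow> nat \<Rightarrow> real"
  assumes m2: "m \<ge> 2"
    and rows: "\<forall>i\<in>{1..m}. open_simplex n (P i)"
    and Q0: "Q 0 \<in> affL n P {1..m}"
    and equi: "\<forall>i\<in>{1..m}. KL n (P i) (Q 0) = KL n (P 1) (Q 0)"
    and Qrec: "\<forall>k\<in>{1..m-2}. is_proj n (Q (k-1)) (affL n P {k+1..m}) (Q k)"
begin

lemma Q_mem_affL:
  assumes "k \<le> m - 2" shows "Q k \<in> affL n P {k+1..m}"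
proof (cases k)
  case (Suc k')
  then have "k \<in> {1..m-2}" using assms by simp
  then show ?thesis using Qrec Suc by (auto simp: is_proj_def)
qed (use Q0 in simp)

lemma Q_open_simplex: "k \<le> m - 2 \<Longrightarrow> open_simplex n (Q k)"
  using Q_mem_affL by (simp add: affL_iff)

lemma expected_llr_Q_step:
  assumes "1 \<le> k" "k \<le> m - 2" "affine_comb n P {k+1..m} R"
  shows "expected_llr n R (Q k) (Q (k-1)) = KL n (Q k) (Q (k-1))"
proof (rule I_projection_expected_llr[OF _ _ _ assms(3)])
  show "open_simplex n (Q (k - 1))" using assms(2) by (intro Q_open_simplex) simp
  have "k \<in> {1..m-2}" using assms(1,2) by simp
  then show "is_proj n (Q (k - 1)) (affL n P {k + 1..m}) (Q k)" using Qrec by blast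
  show "\<forall>i\<in>{k + 1..m}. (\<Sum>j=1..n. P i j) = 1" using rows by (auto simp: open_simplex_def)
qed

lemma KL_pythagoras:
  assumes "1 \<le> k" "k \<le> m - 2" "i \<in> {k+1..m}"
  shows "KL n (P i) (Q k) = KL n (P i) (Q (k-1)) - KL n (Q k) (Q (k-1))"
  using KL_change_reference[of n "P i" "Q k" "Q (k-1)"] assms rows
    expected_llr_Q_step[OF assms(1,2) affine_comb_vertex[OF assms(3)]]
  by (simp add: Q_open_simplex)

lemma KL_P_Q_equidistant:
  assumes "k \<le> m - 2" "i \<in> {k+1..m}"
  shows "KL n (P i) (Q k) = KL n (P m) (Q k)"
  using assms
proof (induction k arbitrary: i)
  case 0
  have "m \<in> {1..m}" "i \<in> {1..m}" using 0 m2 by auto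
  then have "KL n (P i) (Q 0) = KL n (P 1) (Q 0)" "KL n (P m) (Q 0) = KL n (P 1) (Q 0)"
    using equi by blast+
  then show ?case by linarith
next
  case (Suc k)
  have "m \<in> {Suc k+1..m}" using Suc.prems m2 by auto
  with Suc.prems have "KL n (P j) (Q (Suc k)) = KL n (P j) (Q k) - KL n (Q (Suc k)) (Q k)"
    if "j \<in> {i, m}" for j
    using that by (intro KL_pythagoras[of "Suc k", simplified]) auto
  moreover have "KL n (P i) (Q k) = KL n (P m) (Q k)" using Suc.prems by (intro Suc.IH) auto
  ultimately show ?case by simp
qed

lemma expected_llr_const_on_hull:
  assumes "k \<le> K" "K \<le> m - 2" "affine_comb n P {K+1..m} R"
  shows "expected_llr n R (Q K) (Q k) = KL n (Q K) (Q k)"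
  using assms
proof (induction K arbitrary: R rule: dec_induct)
  case base
  then show ?case by (simp add: expected_llr_same KL_self)
next
  case (step K)
  have telescope: "expected_llr n S (Q (Suc K)) (Q k) = KL n (Q (Suc K)) (Q K) + KL n (Q K) (Q k)"
    if S: "affine_comb n P {Suc K+1..m} S" for S
  proof -
    have "expected_llr n S (Q (Suc K)) (Q k)
        = expected_llr n S (Q (Suc K)) (Q K) + expected_llr n S (Q K) (Q k)"
      using step.hyps step.prems(1) by (intro expected_llr_trans Q_open_simplex) auto
    moreover have "expected_llr n S (Q (Suc K)) (Q K) = KL n (Q (Suc K)) (Q K)"
      using expected_llr_Q_step[of "Suc K" S] S step.prems(1) by simp
    moreover have "expected_llr n S (Q K) (Q k) = KL n (Q K) (Q k)"
      using S step.prems(1) by (intro step.IH affine_comb_mono[OF S]) auto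
    ultimately show ?thesis by simp
  qed
  have "affine_comb n P {Suc K+1..m} (Q (Suc K))"
    using Q_mem_affL[OF step.prems(1)] by (simp add: affL_iff)
  then have "KL n (Q (Suc K)) (Q k) = KL n (Q (Suc K)) (Q K) + KL n (Q K) (Q k)"
    using telescope by (simp add: KL_eq_expected_llr)
  then show ?case using telescope[OF step.prems(2)] by simp
qed

lemma KL_le_last_iff:
  assumes "k \<le> K" "K \<le> m - 2" "i \<in> {k+1..m}"
  shows "KL n (P i) (Q K) \<le> KL n (P m) (Q K) \<longleftrightarrow>
         KL n (Q K) (Q k) \<le> expected_llr n (P i) (Q K) (Q k)"
proof -
  have change: "KL n (P j) (Q K) = KL n (P j) (Q k) - expected_llr n (P j) (Q K) (Q k)"
    if "j \<in> {1..m}" for j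
    using that assms rows by (intro KL_change_reference Q_open_simplex) auto
  have "m \<in> {K+1..m}" using assms(2) m2 by auto
  then have "expected_llr n (P m) (Q K) (Q k) = KL n (Q K) (Q k)"
    using assms(1,2) by (intro expected_llr_const_on_hull affine_comb_vertex) auto
  moreover have "KL n (P i) (Q k) = KL n (P m) (Q k)"
    using assms by (intro KL_P_Q_equidistant) auto
  ultimately show ?thesis
    using change[of i] change[of m] assms(3) m2 by auto
qed

lemma KL_le_last:
  assumes K: "K \<le> m - 2"
    and bary: "\<forall>k<K. is_bary m n P (Q k) (lam k)"
    and signs: "\<forall>k<K. (\<forall>i\<in>{1..k}. lam k i = 0) \<and> lam k (k+1) < 0 \<and> (\<forall>i\<in>{k+2..m}. lam k i > 0)"
    and "k \<le> K" "i \<in> {k+1..m}"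
  shows "KL n (P i) (Q K) \<le> KL n (P m) (Q K)"
  using assms(4,5)
proof (induction k arbitrary: i rule: inc_induct)
  case base
  then show ?case using K KL_P_Q_equidistant[of K i] by simp
next
  case (step k)
  define x where "x i = expected_llr n (P i) (Q K) (Q k)" for i
  have weights: "(\<Sum>i=1..m. lam k i) = 1" "\<forall>j\<in>{1..n}. Q k j = (\<Sum>i=1..m. lam k i * P i j)"
    using bary step.hyps by (auto simp: is_bary_def)
  have "(\<Sum>i=1..m. lam k i * x i) = expected_llr n (Q k) (Q K) (Q k)"
    unfolding x_def using expected_llr_affine_comb[OF weights(2)] by simp
  also have "\<dots> \<le> KL n (Q K) (Q k)"
    using K step.hyps by (intro expected_llr_le_KL Q_open_simplex) auto
  finally have "KL n (Q K) (Q k) \<le> x (k+1)"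
  proof (rule neg_weight_imp_ge[OF weights(1)])
    show "k < m" using K step.hyps m2 by simp
    show "\<forall>i\<in>{1..k}. lam k i = 0" "lam k (k+1) < 0" using signs step.hyps by auto
    show "\<forall>i\<in>{k+2..m}. 0 \<le> lam k i \<and> KL n (Q K) (Q k) \<le> x i"
      using signs step K KL_le_last_iff[of k K] by (auto simp: x_def less_imp_le)
  qed
  then have "KL n (P (k+1)) (Q K) \<le> KL n (P m) (Q K)"
    using K step.hyps m2 KL_le_last_iff[of k K "k+1"] by (simp add: x_def)
  then show ?case using step.IH step.prems by (cases "i = k+1") auto
qed

end

theorem theorem13:
  fixes m n K :: nat and P Q lam :: "nat \<Rightarrow> nat \<Rightarrow> real"
  assumes m2: "m \<ge> 2"
    and rows: "\<forall>i\<in>{1..m}. open_simplex n (P i)"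
    and gp: "general_position m n P"
    and Q0: "Q 0 \<in> affL n P {1..m}"
    and equi: "\<forall>i\<in>{1..m}. KL n (P i) (Q 0) = KL n (P 1) (Q 0)"
    and Qrec: "\<forall>k\<in>{1..m-2}. is_proj n (Q (k-1)) (affL n P {k+1..m}) (Q k)"
    and bary: "\<forall>k\<in>{0..m-2}. is_bary m n P (Q k) (lam k)"
    and K: "K \<le> m - 2"
    and before: "\<forall>k<K. (\<forall>i\<in>{1..k}. lam k i = 0) \<and> lam k (k+1) < 0
                       \<and> (\<forall>i\<in>{k+2..m}. lam k i > 0)"
    and atK0: "K = 0 \<longrightarrow> (\<forall>i\<in>{1..m}. lam 0 i \<ge> 0)"
    and atK: "K > 0 \<longrightarrow> (\<forall>i\<in>{1..K}. lam K i = 0) \<and> (\<forall>i\<in>{K+1..m}. lam K i > 0)"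
  shows "(\<exists>l. closed_simplex m l \<and> mutual_info m n P l = capacity m n P)
       \<and> (\<forall>l. closed_simplex m l \<and> mutual_info m n P l = capacity m n P \<longrightarrow>
              (\<forall>j\<in>{1..n}. out_dist m P l j = Q K j))
       \<and> capacity m n P = KL n (P (K+1)) (Q K)"
  \<comment> \<open>General position only guarantees that the Q^k and \<lambda>^k exist and are unique;
      here they are given.\<close>
proof -
  interpret I_projection_chain m n P Q
    using m2 rows Q0 equi Qrec by unfold_locales
  define C where "C = KL n (P m) (Q K)"
  have lam_K: "(\<Sum>i=1..m. lam K i) = 1" "\<forall>j\<in>{1..n}. out_dist m P (lam K) j = Q K j"
    using bary K by (auto simp: is_bary_def out_dist_def)
  have support: "K + 1 \<le> i" if "i \<in> {1..m}" "lam K i \<noteq> 0" for i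
    using that atK by (cases "K = 0") auto
  have "lam K i \<ge> 0" if "i \<in> {1..m}" for i
  proof (cases "K = 0")
    case False
    then show ?thesis using atK that by (cases "i \<le> K") (auto simp: less_imp_le)
  qed (use atK0 that in simp)
  then have lam_K_simplex: "closed_simplex m (lam K)"
    using lam_K(1) by (simp add: closed_simplex_def)
  have le_C: "\<forall>i\<in>{1..m}. KL n (P i) (Q K) \<le> C"
    using K bary before unfolding C_def by (intro ballI KL_le_last) auto
  have support_C: "\<forall>i\<in>{1..m}. lam K i \<noteq> 0 \<longrightarrow> KL n (P i) (Q K) = C"
    using K support KL_P_Q_equidistant[of K] unfolding C_def by auto
  note capacity = capacity_eq_max_KL[OF rows Q_open_simplex[OF K] lam_K_simplex lam_K(2) le_C support_C]
  have "KL n (P (K+1)) (Q K) = C"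
    using K m2 KL_P_Q_equidistant[of K "K+1"] unfolding C_def by simp
  then show ?thesis
    using capacity lam_K_simplex by auto
qed

end
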